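(* Let $\mathscr{C}=\left\{\sum_{i=1}^{\infty} t_i 3^{-i} : t_i\in\{0,2\}\right\}$ be the middle-third Cantor set, and for an integer $m\geq 1$ let $\mathscr{C}^{(m)}=\{x^m : x\in\mathscr{C}\}$. Let $t_m=2\cdot\left\lceil \left(\tfrac{3}{2}\right)^{m-1}\right\rceil$. Then the $t_m$-fold sumset \[\underbrace{\mathscr{C}^{(m)}+\mathscr{C}^{(m)}+\cdots+\mathscr{C}^{(m)}}_{t_m\text{ times}}=\{y_1+\cdots+y_{t_m} : y_j\in\mathscr{C}^{(m)}\}\] contains the interval \[I=\left[(m+1)\left(\tfrac{2}{3}\right)^{m}+(m-1),\ (m-1)\left(\tfrac{2}{3}\right)^{m}+(m+1)\right],\] which has Lebesgue measure $2\left(1-\left(\tfrac{2}{3}\right)^{m}\right)$. *)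

theory Defs
  imports "HOL-Analysis.Analysis"
begin

text \<open>Middle-third Cantor set: all sums  sum_{i>=1} t_i 3^{-i}  with digits t_i in {0,2}.
  Here the digit sequence is indexed from 0, so digit d i has weight 3^{-(i+1)}.\<close>
definition cantor_set :: "real set" where
  "cantor_set = {x. \<exists>d::nat \<Rightarrow> real. (\<forall>i. d i \<in> {0, 2}) \<and> x = (\<Sum>i. d i / 3 ^ Suc i)}"

definition cantor_pow :: "nat \<Rightarrow> real set" where
  "cantor_pow m = {x ^ m | x. x \<in> cantor_set}"

definition sumset_iter :: "nat \<Rightarrow> real set \<Rightarrow> real set" where
  "sumset_iter k A = {\<Sum>j<k. y j | y. \<forall>j<k. y j \<in> A}"

end

theory Submission
  imports Defs
begin

(* On [2/3, 1] the slopes of x^m lie between D0 = m (2/3)^(m-1) and D1 = m, and t_m is chosen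
   so that (t_m - 1) D0 >= D1. Given y between t_m (2/3)^m and t_m, bracket it between the sums
   of x^m over the left and over the right endpoints of t_m Cantor intervals, and refine the
   intervals one coordinate at a time. Removing the middle third of one interval opens a gap
   of at most D1 g in its image, where g is the length of the two remaining thirds, while the
   images of the other t_m - 1 intervals have total length at least (t_m - 1) D0 g; so one of
   the two thirds keeps y bracketed. The nested intervals shrink to points of the Cantor set
   whose m-th powers sum to y, and the interval of the theorem lies inside [t_m (2/3)^m, t_m]. *)

definition slope_bounded_on :: "real set \<Rightarrow> real \<Rightarrow> real \<Rightarrow> (real \<Rightarrow> real) \<Rightarrow> bool" where
  "slope_bounded_on J D0 D1 f \<longleftrightarrow>
     (\<forall>v\<in>J. \<forall>w\<in>J. v \<le> w \<longrightarrow> D0 * (w - v) \<le> f w - f v \<and> f w - f v \<le> D1 * (w - v))"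

lemma slope_bounded_onD:
  assumes "slope_bounded_on J D0 D1 f" and "v \<in> J" and "w \<in> J" and "v \<le> w"
  shows "D0 * (w - v) \<le> f w - f v" and "f w - f v \<le> D1 * (w - v)"
  using assms unfolding slope_bounded_on_def by auto

lemma slope_bounded_on_power:
  fixes c d :: real
  assumes "0 \<le> c"
  shows "slope_bounded_on {c..d} (real m * c ^ (m - 1)) (real m * d ^ (m - 1)) (\<lambda>x. x ^ m)"
  unfolding slope_bounded_on_def
proof (intro ballI impI)
  fix v w assume v: "v \<in> {c..d}" and w: "w \<in> {c..d}" and "v \<le> w"
  show "real m * c ^ (m - 1) * (w - v) \<le> w ^ m - v ^ m \<and> w ^ m - v ^ m \<le> real m * d ^ (m - 1) * (w - v)"
  proof (cases m)
    case (Suc n)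
    define S where "S = (\<Sum>p<Suc n. w ^ p * v ^ (n - p))"
    have diff: "w ^ m - v ^ m = (w - v) * S"
      unfolding Suc S_def by (rule diff_power_eq_sum)
    have "c ^ n \<le> w ^ p * v ^ (n - p) \<and> w ^ p * v ^ (n - p) \<le> d ^ n" if "p < Suc n" for p
    proof -
      have "c ^ n = c ^ p * c ^ (n - p)" "d ^ n = d ^ p * d ^ (n - p)"
        using that by (simp_all flip: power_add)
      moreover have "c ^ p * c ^ (n - p) \<le> w ^ p * v ^ (n - p)"
        using assms v w by (intro mult_mono power_mono) auto
      moreover have "w ^ p * v ^ (n - p) \<le> d ^ p * d ^ (n - p)"
        using assms v w by (intro mult_mono power_mono) auto
      ultimately show ?thesis by simp
    qed
    then have "real m * c ^ n \<le> S" "S \<le> real m * d ^ n"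
      using sum_mono[of "{..<Suc n}" "\<lambda>_. c ^ n" "\<lambda>p. w ^ p * v ^ (n - p)"]
        sum_mono[of "{..<Suc n}" "\<lambda>p. w ^ p * v ^ (n - p)" "\<lambda>_. d ^ n"]
      by (simp_all add: Suc S_def)
    with \<open>v \<le> w\<close> have "(w - v) * (real m * c ^ n) \<le> (w - v) * S \<and> (w - v) * S \<le> (w - v) * (real m * d ^ n)"
      by (simp add: mult_left_mono)
    then show ?thesis
      unfolding diff by (simp add: Suc mult_ac)
  qed simp
qed

lemma slope_bounded_on_continuous_on:
  assumes slope: "slope_bounded_on J D0 D1 f" and "0 \<le> D0"
  shows "continuous_on J f"
proof (rule lipschitz_on_continuous_on)
  have increment: "\<bar>f w - f v\<bar> \<le> D1 * \<bar>w - v\<bar>" if "v \<in> J" "w \<in> J" "v \<le> w" for v w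
  proof -
    note slope_bounded_onD[OF slope that]
    moreover have "0 \<le> D0 * (w - v)" using \<open>0 \<le> D0\<close> \<open>v \<le> w\<close> by simp
    ultimately show ?thesis using \<open>v \<le> w\<close> by simp
  qed
  show "(max D1 0)-lipschitz_on J f"
  proof (rule lipschitz_onI)
    fix v w assume "v \<in> J" "w \<in> J"
    then have "\<bar>f w - f v\<bar> \<le> D1 * \<bar>w - v\<bar>"
      using increment[of v w] increment[of w v] by (cases "v \<le> w") (simp_all add: abs_minus_commute)
    also have "\<dots> \<le> max D1 0 * \<bar>w - v\<bar>" by (simp add: mult_right_mono)
    finally show "dist (f v) (f w) \<le> max D1 0 * dist v w"
      by (simp add: dist_real_def abs_minus_commute)
  qed simp
qed

lemma cantor_set_limit:
  fixes S :: "nat \<Rightarrow> real"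
  assumes "S 0 = 0" and step: "\<And>n. S (Suc n) - S n \<in> {0, 2 / 3 ^ Suc n}"
  shows "S \<longlonglongrightarrow> lim S" and "lim S \<in> cantor_set"
proof -
  define d where "d n = 3 ^ Suc n * (S (Suc n) - S n)" for n
  have digits: "d n \<in> {0, 2}" for n
    using step[of n] by (auto simp: d_def)
  have partial_sums: "S n = (\<Sum>i<n. d i / 3 ^ Suc i)" for n
    using sum_lessThan_telescope[of S n] \<open>S 0 = 0\<close> by (simp add: d_def)
  have "summable (\<lambda>i. d i / 3 ^ Suc i)"
  proof (rule summable_comparison_test')
    show "summable (\<lambda>i. 2 * (1/3::real) ^ i)" by (simp add: summable_geometric)
    show "norm (d i / 3 ^ Suc i) \<le> 2 * (1/3) ^ i" for i
      using digits[of i] by (auto simp: power_one_over divide_le_eq)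
  qed
  then have "S \<longlonglongrightarrow> (\<Sum>i. d i / 3 ^ Suc i)"
    unfolding partial_sums by (rule summable_LIMSEQ)
  moreover have "(\<Sum>i. d i / 3 ^ Suc i) \<in> cantor_set"
    unfolding cantor_set_def using digits by blast
  ultimately show "S \<longlonglongrightarrow> lim S" and "lim S \<in> cantor_set"
    by (simp_all add: limI)
qed

lemma sum_increments_lower_bound:
  fixes f :: "real \<Rightarrow> real" and V w :: "'i \<Rightarrow> real"
  assumes slope: "slope_bounded_on {a..b} D0 D1 f" and "0 \<le> D0" and "0 \<le> g"
    and box: "\<And>j. j \<in> R \<Longrightarrow> a \<le> V j \<and> g \<le> w j \<and> V j + w j \<le> b"
  shows "real (card R) * D0 * g \<le> (\<Sum>j\<in>R. f (V j + w j)) - (\<Sum>j\<in>R. f (V j))"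
proof -
  have "D0 * g \<le> f (V j + w j) - f (V j)" if "j \<in> R" for j
  proof -
    have "a \<le> V j" "g \<le> w j" "V j + w j \<le> b" using box that by auto
    then have "D0 * w j \<le> f (V j + w j) - f (V j)"
      using slope_bounded_onD(1)[OF slope, of "V j" "V j + w j"] \<open>0 \<le> g\<close> by simp
    moreover have "D0 * g \<le> D0 * w j" using \<open>g \<le> w j\<close> \<open>0 \<le> D0\<close> by (rule mult_left_mono)
    ultimately show ?thesis by linarith
  qed
  then have "(\<Sum>j\<in>R. D0 * g) \<le> (\<Sum>j\<in>R. f (V j + w j) - f (V j))"
    by (rule sum_mono)
  then show ?thesis by (simp add: sum_subtractf mult.assoc)
qed

lemma sum_refine_coordinate:
  fixes f :: "real \<Rightarrow> real" and V w :: "'i \<Rightarrow> real"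
  assumes slope: "slope_bounded_on {a..b} D0 D1 f" and "0 \<le> D0"
    and D1: "D1 \<le> (real (card K) - 1) * D0"
    and "finite K" and "i \<in> K"
    and box: "\<And>j. j \<in> K \<Longrightarrow> a \<le> V j \<and> g \<le> w j \<and> V j + w j \<le> b" and "w i = 3 * g"
    and lo: "(\<Sum>j\<in>K. f (V j)) \<le> y" and hi: "y \<le> (\<Sum>j\<in>K. f (V j + w j))"
  obtains c where "c = 0 \<or> c = 2 * g"
    and "(\<Sum>j\<in>K. f ((V(i := V i + c)) j)) \<le> y"
    and "y \<le> (\<Sum>j\<in>K. f ((V(i := V i + c)) j + (w(i := g)) j))"
proof -
  let ?R = "K - {i}"
  define A where "A = (\<Sum>j\<in>?R. f (V j))"
  define B where "B = (\<Sum>j\<in>?R. f (V j + w j))"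
  have split: "(\<Sum>j\<in>K. F j) = F i + (\<Sum>j\<in>?R. F j)" for F :: "'i \<Rightarrow> real"
    using sum.remove[OF \<open>finite K\<close> \<open>i \<in> K\<close>] .
  have sum_upd: "(\<Sum>j\<in>K. f ((V(i := x)) j)) = f x + A" for x
    unfolding A_def split[of "\<lambda>j. f ((V(i := x)) j)"] by (auto intro!: sum.cong)
  have sum_upd_width: "(\<Sum>j\<in>K. f ((V(i := x)) j + (w(i := g)) j)) = f (x + g) + B" for x
    unfolding B_def split[of "\<lambda>j. f ((V(i := x)) j + (w(i := g)) j)"] by (auto intro!: sum.cong)
  have "0 \<le> g" "a \<le> V i" "V i + 3 * g \<le> b"
    using box[OF \<open>i \<in> K\<close>] \<open>w i = 3 * g\<close> by auto
  have "real (card ?R) * D0 * g \<le> B - A"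
    unfolding A_def B_def using box \<open>0 \<le> g\<close>
    by (intro sum_increments_lower_bound[OF slope \<open>0 \<le> D0\<close>]) auto
  moreover have "real (card ?R) = real (card K) - 1"
  proof -
    have "0 < card K" using \<open>finite K\<close> \<open>i \<in> K\<close> card_gt_0_iff by blast
    then show ?thesis using \<open>i \<in> K\<close> by (simp add: card_Diff_singleton)
  qed
  moreover have "f (V i + 2 * g) - f (V i + g) \<le> D1 * g"
    using slope_bounded_onD(2)[OF slope, of "V i + g" "V i + 2 * g"]
      \<open>0 \<le> g\<close> \<open>a \<le> V i\<close> \<open>V i + 3 * g \<le> b\<close> by simp
  moreover have "D1 * g \<le> (real (card K) - 1) * D0 * g"
    using D1 \<open>0 \<le> g\<close> by (rule mult_right_mono)
  ultimately have gap: "f (V i + 2 * g) - f (V i + g) \<le> B - A"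
    by simp
  have "f (V i) + A \<le> y" "y \<le> f (V i + 3 * g) + B"
    using lo hi by (simp_all add: A_def B_def split \<open>w i = 3 * g\<close>)
  \<comment> \<open>Removing the middle third from the range of coordinate i opens an image gap that the
    image interval of the other coordinates, of length B - A, bridges.\<close>
  then consider "f (V i) + A \<le> y" "y \<le> f (V i + g) + B"
    | "f (V i + 2 * g) + A \<le> y" "y \<le> f (V i + 3 * g) + B"
    using gap by linarith
  then show ?thesis
  proof cases
    case 1
    then show ?thesis
      by (intro that[of 0]; (unfold sum_upd sum_upd_width)?) simp_all
  next
    case 2
    then show ?thesis
      by (intro that[of "2 * g"]; (unfold sum_upd sum_upd_width)?) (simp_all add: algebra_simps)
  qed
qed

lemma sum_refine_coordinates:
  fixes f :: "real \<Rightarrow> real" and U :: "'i \<Rightarrow> real"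
  assumes slope: "slope_bounded_on {a..b} D0 D1 f" and "0 \<le> D0"
    and D1: "D1 \<le> (real (card K) - 1) * D0"
    and "finite K" and "0 \<le> g"
    and box: "\<And>j. j \<in> K \<Longrightarrow> a \<le> U j \<and> U j + 3 * g \<le> b"
    and lo: "(\<Sum>j\<in>K. f (U j)) \<le> y" and hi: "y \<le> (\<Sum>j\<in>K. f (U j + 3 * g))"
  obtains V where "\<And>j. V j = U j \<or> V j = U j + 2 * g"
    and "(\<Sum>j\<in>K. f (V j)) \<le> y" and "y \<le> (\<Sum>j\<in>K. f (V j + g))"
proof -
  have "\<exists>V. (\<forall>j. V j = U j \<or> (j \<in> L \<and> V j = U j + 2 * g)) \<and> (\<Sum>j\<in>K. f (V j)) \<le> y
      \<and> y \<le> (\<Sum>j\<in>K. f (V j + (if j \<in> L then g else 3 * g)))" if "L \<subseteq> K" for L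
    using finite_subset[OF that \<open>finite K\<close>] that
  proof (induction L rule: finite_subset_induct)
    case empty
    show ?case using lo hi by auto
  next
    case (insert l L)
    define w where "w j = (if j \<in> L then g else 3 * g)" for j
    obtain V where V: "\<forall>j. V j = U j \<or> (j \<in> L \<and> V j = U j + 2 * g)"
      and lo': "(\<Sum>j\<in>K. f (V j)) \<le> y" and hi': "y \<le> (\<Sum>j\<in>K. f (V j + w j))"
      using insert.IH insert.hyps unfolding w_def by blast
    have box': "a \<le> V j \<and> g \<le> w j \<and> V j + w j \<le> b" if "j \<in> K" for j
      using box[OF that] V[rule_format, of j] \<open>0 \<le> g\<close> by (auto simp: w_def)
    have "w l = 3 * g" using \<open>l \<notin> L\<close> by (simp add: w_def)
    obtain c where c: "c = 0 \<or> c = 2 * g"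
      and "(\<Sum>j\<in>K. f ((V(l := V l + c)) j)) \<le> y"
      and "y \<le> (\<Sum>j\<in>K. f ((V(l := V l + c)) j + (w(l := g)) j))"
      by (rule sum_refine_coordinate[OF slope \<open>0 \<le> D0\<close> D1 \<open>finite K\<close> \<open>l \<in> K\<close> box' \<open>w l = 3 * g\<close> lo' hi'])
    moreover have "w(l := g) = (\<lambda>j. if j \<in> insert l L then g else 3 * g)"
      by (auto simp: w_def)
    moreover have "\<forall>j. (V(l := V l + c)) j = U j \<or> (j \<in> insert l L \<and> (V(l := V l + c)) j = U j + 2 * g)"
      using V c \<open>l \<notin> L\<close> by auto
    ultimately show ?case by metis
  qed
  from this[OF order_refl] show ?thesis
    using that by auto
qed

definition cantor_bracket :: "(real \<Rightarrow> real) \<Rightarrow> nat \<Rightarrow> real \<Rightarrow> nat \<Rightarrow> (nat \<Rightarrow> real) \<Rightarrow> bool" where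
  "cantor_bracket f t y n U \<longleftrightarrow> (\<forall>j<t. 2/3 \<le> U j \<and> U j + 1 / 3 ^ n \<le> 1)
     \<and> (\<Sum>j<t. f (U j)) \<le> y \<and> y \<le> (\<Sum>j<t. f (U j + 1 / 3 ^ n))"

lemma cantor_bracket_one:
  assumes "real t * f (2/3) \<le> y" and "y \<le> real t * f 1"
  shows "cantor_bracket f t y 1 (\<lambda>_. 2/3)"
  using assms by (simp add: cantor_bracket_def)

lemma cantor_bracket_refine:
  fixes f :: "real \<Rightarrow> real"
  assumes slope: "slope_bounded_on {2/3..1} D0 D1 f" and "0 \<le> D0"
    and D1: "D1 \<le> (real t - 1) * D0" and "cantor_bracket f t y n U"
  obtains V where "\<And>j. V j - U j \<in> {0, 2 / 3 ^ Suc n}" and "cantor_bracket f t y (Suc n) V"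
proof -
  define g :: real where "g = 1 / 3 ^ Suc n"
  have "(1::real) / 3 ^ n = 3 * g" and "0 < g" by (simp_all add: g_def)
  with \<open>cantor_bracket f t y n U\<close> have box: "\<forall>j<t. 2/3 \<le> U j \<and> U j + 3 * g \<le> 1"
    and "(\<Sum>j<t. f (U j)) \<le> y" and "y \<le> (\<Sum>j<t. f (U j + 3 * g))"
    by (simp_all add: cantor_bracket_def)
  then obtain V where V: "\<And>j. V j = U j \<or> V j = U j + 2 * g"
    and "(\<Sum>j<t. f (V j)) \<le> y" and "y \<le> (\<Sum>j<t. f (V j + g))"
    using sum_refine_coordinates[OF slope \<open>0 \<le> D0\<close>, of "{..<t}" g U y] D1 \<open>0 < g\<close>
    by auto
  moreover have "2/3 \<le> V j \<and> V j + g \<le> 1" if "j < t" for j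
    using V[of j] box that \<open>0 < g\<close> by auto
  moreover have "V j - U j \<in> {0, 2 / 3 ^ Suc n}" for j
    using V[of j] by (auto simp: g_def)
  ultimately show ?thesis
    by (intro that[of V]) (auto simp: cantor_bracket_def g_def)
qed

lemma cantor_brackets_sequence:
  fixes f :: "real \<Rightarrow> real"
  assumes slope: "slope_bounded_on {2/3..1} D0 D1 f" and "0 \<le> D0"
    and D1: "D1 \<le> (real t - 1) * D0"
    and lo: "real t * f (2/3) \<le> y" and hi: "y \<le> real t * f 1"
  obtains S :: "nat \<Rightarrow> nat \<Rightarrow> real"
  where "\<And>j. S 0 j = 0" and "\<And>n j. S (Suc n) j - S n j \<in> {0, 2 / 3 ^ Suc n}"
    and "\<And>n. 0 < n \<Longrightarrow> cantor_bracket f t y n (S n)"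
proof -
  \<comment> \<open>Stage n consists of the level-n Cantor intervals [S n j, S n j + 3^-n]. Stage 0 is [0, 1],
    where the slope bounds need not hold, so the bracket invariant is only imposed from stage 1
    on, whose intervals lie in [2/3, 1].\<close>
  have "\<exists>S. \<forall>n. (if n = 0 then S n = (\<lambda>_. 0) else cantor_bracket f t y n (S n))
      \<and> (\<forall>j. S (Suc n) j - S n j \<in> {0, 2 / 3 ^ Suc n})"
  proof (rule dependent_nat_choice)
    fix n and U :: "nat \<Rightarrow> real"
    assume U: "if n = 0 then U = (\<lambda>_. 0) else cantor_bracket f t y n U"
    show "\<exists>V. (if Suc n = 0 then V = (\<lambda>_. 0) else cantor_bracket f t y (Suc n) V)
        \<and> (\<forall>j. V j - U j \<in> {0, 2 / 3 ^ Suc n})"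
    proof (cases "n = 0")
      case True
      then show ?thesis
        using U cantor_bracket_one[OF lo hi] by (intro exI[of _ "\<lambda>_. 2/3"]) simp
    next
      case False
      with U have "cantor_bracket f t y n U" by simp
      then obtain V where "\<And>j. V j - U j \<in> {0, 2 / 3 ^ Suc n}" and "cantor_bracket f t y (Suc n) V"
        using cantor_bracket_refine[OF slope \<open>0 \<le> D0\<close> D1] by blast
      then show ?thesis by auto
    qed
  qed simp
  then obtain S where S: "\<And>n. (if n = 0 then S n = (\<lambda>_. 0) else cantor_bracket f t y n (S n))"
    and step: "\<And>n j. S (Suc n) j - S n j \<in> {0, 2 / 3 ^ Suc n}"
    by blast
  show ?thesis
  proof (rule that)
    show "S 0 j = 0" for j using S[of 0] by simp
    show "cantor_bracket f t y n (S n)" if "0 < n" for n using S[of n] that by simp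
  qed (rule step)
qed

lemma sum_continuous_squeeze:
  fixes f :: "real \<Rightarrow> real" and u v :: "nat \<Rightarrow> 'i \<Rightarrow> real"
  assumes cont: "continuous_on J f" and "closed J"
    and lim_u: "\<And>j. j \<in> K \<Longrightarrow> (\<lambda>n. u n j) \<longlonglongrightarrow> x j"
    and lim_v: "\<And>j. j \<in> K \<Longrightarrow> (\<lambda>n. v n j) \<longlonglongrightarrow> x j"
    and ev_J: "\<And>j. j \<in> K \<Longrightarrow> \<forall>\<^sub>F n in sequentially. u n j \<in> J \<and> v n j \<in> J"
    and between: "\<forall>\<^sub>F n in sequentially. (\<Sum>j\<in>K. f (u n j)) \<le> y \<and> y \<le> (\<Sum>j\<in>K. f (v n j))"
  shows "y = (\<Sum>j\<in>K. f (x j))"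
proof -
  have "(\<lambda>n. f (u n j)) \<longlonglongrightarrow> f (x j)" and "(\<lambda>n. f (v n j)) \<longlonglongrightarrow> f (x j)" if "j \<in> K" for j
  proof -
    have ev_u: "\<forall>\<^sub>F n in sequentially. u n j \<in> J" and ev_v: "\<forall>\<^sub>F n in sequentially. v n j \<in> J"
      using ev_J[OF that] by (auto elim: eventually_mono)
    have "x j \<in> J"
      using \<open>closed J\<close> ev_u trivial_limit_sequentially lim_u[OF that] by (rule Lim_in_closed_set)
    then show "(\<lambda>n. f (u n j)) \<longlonglongrightarrow> f (x j)" and "(\<lambda>n. f (v n j)) \<longlonglongrightarrow> f (x j)"
      using continuous_on_tendsto_compose[OF cont lim_u[OF that] _ ev_u]
        continuous_on_tendsto_compose[OF cont lim_v[OF that] _ ev_v] by auto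
  qed
  then have "(\<lambda>n. \<Sum>j\<in>K. f (u n j)) \<longlonglongrightarrow> (\<Sum>j\<in>K. f (x j))"
    and "(\<lambda>n. \<Sum>j\<in>K. f (v n j)) \<longlonglongrightarrow> (\<Sum>j\<in>K. f (x j))"
    by (auto intro: tendsto_sum)
  with between have "(\<Sum>j\<in>K. f (x j)) \<le> y" and "y \<le> (\<Sum>j\<in>K. f (x j))"
    by (auto intro: tendsto_upperbound tendsto_lowerbound dest: eventually_conj_iff[THEN iffD1])
  then show ?thesis by (rule antisym[rotated])
qed

lemma Icc_subset_sumset_iter_cantor_image:
  fixes f :: "real \<Rightarrow> real"
  assumes slope: "slope_bounded_on {2/3..1} D0 D1 f" and "0 \<le> D0"
    and D1: "D1 \<le> (real t - 1) * D0"
  shows "{real t * f (2/3) .. real t * f 1} \<subseteq> sumset_iter t (f ` cantor_set)"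
proof
  fix y assume "y \<in> {real t * f (2/3) .. real t * f 1}"
  then obtain S :: "nat \<Rightarrow> nat \<Rightarrow> real"
    where "\<And>j. S 0 j = 0" and "\<And>n j. S (Suc n) j - S n j \<in> {0, 2 / 3 ^ Suc n}"
    and "\<And>n. 0 < n \<Longrightarrow> cantor_bracket f t y n (S n)"
    using cantor_brackets_sequence[OF slope \<open>0 \<le> D0\<close> D1] by auto
  then have box: "\<And>n j. 0 < n \<Longrightarrow> j < t \<Longrightarrow> 2/3 \<le> S n j \<and> S n j + 1 / 3 ^ n \<le> 1"
    and bracket: "\<And>n. 0 < n \<Longrightarrow> (\<Sum>j<t. f (S n j)) \<le> y \<and> y \<le> (\<Sum>j<t. f (S n j + 1 / 3 ^ n))"
    by (simp_all add: cantor_bracket_def)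
  define x where "x j = lim (\<lambda>n. S n j)" for j
  have lim_left: "(\<lambda>n. S n j) \<longlonglongrightarrow> x j" and "x j \<in> cantor_set" for j
    using cantor_set_limit[of "\<lambda>n. S n j"] \<open>\<And>j. S 0 j = 0\<close> \<open>\<And>n j. S (Suc n) j - S n j \<in> _\<close>
    unfolding x_def by auto
  have lim_right: "(\<lambda>n. S n j + 1 / 3 ^ n) \<longlonglongrightarrow> x j" for j
    using tendsto_add[OF lim_left LIMSEQ_divide_realpow_zero[of 3 1]] by simp
  have "\<forall>\<^sub>F n in sequentially. S n j \<in> {2/3..1} \<and> S n j + 1 / 3 ^ n \<in> {2/3..1}"
    if "j < t" for j
    using eventually_gt_at_top[of 0]
  proof (rule eventually_mono)
    fix n :: nat assume "0 < n"
    have "(0::real) < 1 / 3 ^ n" by simp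
    with box[OF \<open>0 < n\<close> \<open>j < t\<close>] show "S n j \<in> {2/3..1} \<and> S n j + 1 / 3 ^ n \<in> {2/3..1}"
      unfolding atLeastAtMost_iff by linarith
  qed
  moreover have "\<forall>\<^sub>F n in sequentially. (\<Sum>j<t. f (S n j)) \<le> y \<and> y \<le> (\<Sum>j<t. f (S n j + 1 / 3 ^ n))"
    using eventually_gt_at_top[of 0] by (rule eventually_mono) (rule bracket)
  moreover have "continuous_on {2/3..1} f"
    using slope \<open>0 \<le> D0\<close> by (rule slope_bounded_on_continuous_on)
  ultimately have "y = (\<Sum>j<t. f (x j))"
    using lim_left lim_right by (intro sum_continuous_squeeze[of "{2/3..1}"]) auto
  then show "y \<in> sumset_iter t (f ` cantor_set)"
    unfolding sumset_iter_def using \<open>\<And>j. x j \<in> cantor_set\<close> by blast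
qed

lemma of_nat_less_three_halves_power: "real k < (3/2) ^ k"
proof (induction k)
  case (Suc k)
  show ?case
  proof (cases "k \<le> 1")
    case True
    then show ?thesis by (auto simp: le_Suc_eq)
  next
    case False
    then have "real (Suc k) \<le> 3/2 * real k" by simp
    also have "\<dots> < 3/2 * (3/2) ^ k" using Suc.IH by simp
    finally show ?thesis by simp
  qed
qed simp

lemma three_halves_power_mult_two_thirds_power:
  assumes "1 \<le> m"
  shows "(3/2::real) ^ (m - 1) * (2/3) ^ m = 2/3"
proof -
  obtain k where "m = Suc k" using assms by (cases m) auto
  then show ?thesis by (simp flip: power_mult_distrib)
qed

lemma of_nat_le_ceiling_three_halves_power:
  assumes "1 \<le> m"
  shows "real m \<le> of_int \<lceil>(3/2::real) ^ (m - 1)\<rceil>"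
proof -
  have "real (m - 1) < (3/2) ^ (m - 1)" by (rule of_nat_less_three_halves_power)
  then have "int m - 1 < \<lceil>(3/2::real) ^ (m - 1)\<rceil>"
    using assms by (simp add: less_ceiling_iff)
  then show ?thesis by linarith
qed

lemma two_ceiling_three_halves_power_mult_le:
  assumes "1 \<le> m"
  shows "2 * of_int \<lceil>(3/2::real) ^ (m - 1)\<rceil> * (2/3) ^ m \<le> (real m + 1) * (2/3::real) ^ m + (real m - 1)"
proof (cases "m = 1")
  case False
  define a :: real where "a = (2/3) ^ m"
  define R :: real where "R = (3/2) ^ (m - 1)"
  have "0 < a" by (simp add: a_def)
  have "2 * of_int \<lceil>R\<rceil> * a \<le> 2 * (R + 1) * a"
    using \<open>0 < a\<close> ceiling_correct[of R] by (intro mult_right_mono) auto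
  also have "\<dots> = 4/3 + 2 * a"
    using three_halves_power_mult_two_thirds_power[OF assms] by (simp add: R_def a_def algebra_simps)
  also have "\<dots> \<le> (real m + 1) * a + (real m - 1)"
  proof (cases "m = 2")
    case False
    with assms \<open>m \<noteq> 1\<close> have "3 \<le> real m" by simp
    with \<open>0 < a\<close> have "2 * a \<le> (real m - 1) * a" by (intro mult_right_mono) auto
    moreover have "(real m + 1) * a = (real m - 1) * a + 2 * a" by (simp add: algebra_simps)
    ultimately show ?thesis using \<open>3 \<le> real m\<close> \<open>0 < a\<close> by linarith
  qed (simp add: a_def power2_eq_square)
  finally show ?thesis by (simp add: R_def a_def)
qed simp

lemma one_le_two_ceiling_three_halves_power_minus_one_mult:
  "1 \<le> (2 * of_int \<lceil>(3/2::real) ^ k\<rceil> - 1) * (2/3::real) ^ k"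
proof -
  have "(3/2::real) ^ k \<le> of_int \<lceil>(3/2::real) ^ k\<rceil>" and "(1::real) \<le> of_int \<lceil>(3/2::real) ^ k\<rceil>"
    by (simp_all add: le_of_int_ceiling)
  then have "(3/2::real) ^ k \<le> 2 * of_int \<lceil>(3/2::real) ^ k\<rceil> - 1"
    by linarith
  then have "(3/2) ^ k * (2/3) ^ k \<le> (2 * of_int \<lceil>(3/2::real) ^ k\<rceil> - 1) * (2/3::real) ^ k"
    by (rule mult_right_mono) simp
  then show ?thesis by (simp flip: power_mult_distrib)
qed

lemma Icc_subset_Icc_two_ceiling_three_halves_power:
  assumes "1 \<le> m" and t: "real t = 2 * of_int \<lceil>(3/2::real) ^ (m - 1)\<rceil>"
  shows "{(real m + 1) * (2/3) ^ m + (real m - 1) .. (real m - 1) * (2/3) ^ m + (real m + 1)}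
    \<subseteq> {real t * (2/3) ^ m .. real t}"
proof -
  have "(real m - 1) * (2/3) ^ m \<le> real m - 1"
    using assms by (intro mult_left_le power_le_one) auto
  then show ?thesis
    using two_ceiling_three_halves_power_mult_le[OF \<open>1 \<le> m\<close>]
      of_nat_le_ceiling_three_halves_power[OF \<open>1 \<le> m\<close>]
    unfolding atLeastatMost_subset_iff t by linarith
qed

theorem theorem3:
  fixes m :: nat
  assumes "m \<ge> 1"
  shows "{(real m + 1) * (2/3) ^ m + (real m - 1) .. (real m - 1) * (2/3) ^ m + (real m + 1)}
           \<subseteq> sumset_iter (2 * nat \<lceil>(3/2 :: real) ^ (m - 1)\<rceil>) (cantor_pow m)
         \<and> measure lebesgue {(real m + 1) * (2/3) ^ m + (real m - 1) .. (real m - 1) * (2/3) ^ m + (real m + 1)}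
           = 2 * (1 - (2/3) ^ m)"
proof -
  define t where "t = 2 * nat \<lceil>(3/2 :: real) ^ (m - 1)\<rceil>"
  have t: "real t = 2 * of_int \<lceil>(3/2 :: real) ^ (m - 1)\<rceil>"
    unfolding t_def by simp
  have "real m * 1 \<le> real m * ((real t - 1) * (2/3) ^ (m - 1))"
    unfolding t by (intro mult_left_mono one_le_two_ceiling_three_halves_power_minus_one_mult) simp
  then have D1: "real m \<le> (real t - 1) * (real m * (2/3) ^ (m - 1))"
    by (simp add: mult_ac)
  have "slope_bounded_on {2/3..1} (real m * (2/3) ^ (m - 1)) (real m) (\<lambda>x. x ^ m)"
    using slope_bounded_on_power[of "2/3" 1 m] by simp
  from Icc_subset_sumset_iter_cantor_image[OF this _ D1]
  have "{real t * (2/3) ^ m .. real t} \<subseteq> sumset_iter t (cantor_pow m)"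
    by (simp add: cantor_pow_def Setcompr_eq_image)
  with Icc_subset_Icc_two_ceiling_three_halves_power[OF assms t]
  have "{(real m + 1) * (2/3) ^ m + (real m - 1) .. (real m - 1) * (2/3) ^ m + (real m + 1)}
      \<subseteq> sumset_iter t (cantor_pow m)"
    by (rule subset_trans)
  moreover have "(real m + 1) * (2/3::real) ^ m + (real m - 1) \<le> (real m - 1) * (2/3) ^ m + (real m + 1)"
    using power_le_one[of "2/3::real" m] by (simp add: algebra_simps)
  ultimately show ?thesis
    unfolding t_def by (simp add: algebra_simps)
qed

end
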